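(* Let $A,B\in\mathbb{R}^{m\times n}$ with $A\ne0$, $B\neq0$ and $\operatorname{rank}(A+B)>1$. Choose $(i,j)$ with $a_{i,j}\neq0$, and assume it is not the case that ($b_{i,j}\neq0$ and $\operatorname{rank}(A-\frac{a_{i,j}}{b_{i,j}}B)=1$). Define $\mathbf{r}_j(\lambda)=A^{(j)}+\lambda B^{(j)}$ and $\mathbf{c}_i(\lambda)^\mathsf{T}=\frac{1}{a_{i,j}+\lambda b_{i,j}}(A_{(i)}+\lambda B_{(i)})$ (for $a_{i,j}+\lambda b_{i,j}\neq0$), and $f_{s,t}(i,j;\lambda)=a_{s,t}+\lambda b_{s,t}-\frac{(a_{s,j}+\lambda b_{s,j})(a_{i,t}+\lambda b_{i,t})}{a_{i,j}+\lambda b_{i,j}}$. Pick any $(l,k)$ such that $f_{l,k}(i,j;\lambda)$ is not identically zero, and let $\hat\Lambda$ be the (at most two-element) set of $\hat\lambda\in\mathbb{C}$ with $a_{i,j}+\hat\lambda b_{i,j}\neq0$ and $f_{l,k}(i,j;\hat\lambda)=0$. Then there exists $\lambda^*\in\mathbb{C}$ with $\operatorname{rank}(A+\lambda^*B)=1$ if and only if some $\hat\lambda\in\hat\Lambda$ satisfies $A+\hat\lambda B=\mathbf{r}_j(\hat\lambda)\mathbf{c}_i(\hat\lambda)^\mathsf{T}$.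
   Context: For a matrix $M$, $M_{(i)}$ is its $i$-th row, $M^{(j)}$ its $j$-th column, and $m_{i,j}$ its $(i,j)$ entry. Ranks are over $\mathbb{C}$. A rational function is identically zero iff its numerator is the zero polynomial. *)

theory Defs
  imports "Jordan_Normal_Form.DL_Rank" "HOL-Computational_Algebra.Polynomial"
begin

definition crank :: "complex mat \<Rightarrow> nat" where
  "crank M = vec_space.rank (dim_row M) M"

definition cmat :: "real mat \<Rightarrow> complex mat" where
  "cmat A = map_mat complex_of_real A"

definition pencil :: "real mat \<Rightarrow> real mat \<Rightarrow> complex \<Rightarrow> complex mat" where
  "pencil A B lam = cmat A + lam \<cdot>\<^sub>m cmat B"

definition rvec :: "real mat \<Rightarrow> real mat \<Rightarrow> nat \<Rightarrow> complex \<Rightarrow> complex vec" where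
  "rvec A B j lam = col (pencil A B lam) j"

definition cvec :: "real mat \<Rightarrow> real mat \<Rightarrow> nat \<Rightarrow> nat \<Rightarrow> complex \<Rightarrow> complex vec" where
  "cvec A B i j lam =
     (1 / (complex_of_real (A $$ (i,j)) + lam * complex_of_real (B $$ (i,j)))) \<cdot>\<^sub>v row (pencil A B lam) i"

definition outer :: "complex vec \<Rightarrow> complex vec \<Rightarrow> complex mat" where
  "outer r c = mat (dim_vec r) (dim_vec c) (\<lambda>(s,t). r $ s * c $ t)"

definition fval :: "real mat \<Rightarrow> real mat \<Rightarrow> nat \<Rightarrow> nat \<Rightarrow> nat \<Rightarrow> nat \<Rightarrow> complex \<Rightarrow> complex" where
  "fval A B s t i j lam =
     (let e = (\<lambda>p q. complex_of_real (A $$ (p,q)) + lam * complex_of_real (B $$ (p,q)))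
      in e s t - e s j * e i t / e i j)"

text \<open>Numerator polynomial of f_{s,t}(i,j;lambda) (after multiplying by a_ij + lambda b_ij);
  the rational function f_{s,t}(i,j;.) is identically zero iff this polynomial is zero.\<close>
definition fnum :: "real mat \<Rightarrow> real mat \<Rightarrow> nat \<Rightarrow> nat \<Rightarrow> nat \<Rightarrow> nat \<Rightarrow> complex poly" where
  "fnum A B s t i j =
     (let e = (\<lambda>p q. [:complex_of_real (A $$ (p,q)), complex_of_real (B $$ (p,q)):])
      in e s t * e i j - e s j * e i t)"

end

theory Submission
  imports Defs
begin

text \<open>A matrix with a nonzero pivot entry \<open>M\<^sub>i\<^sub>j\<close> has rank one exactly when all \<open>2\<times>2\<close> minors through
  the pivot vanish, i.e. when \<open>M\<close> is the outer product of its \<open>j\<close>-th column and its \<open>i\<close>-th row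
  scaled by \<open>1 / M\<^sub>i\<^sub>j\<close>. On the pencil, the hypothesis excluding \<open>\<lambda> = -a\<^sub>i\<^sub>j/b\<^sub>i\<^sub>j\<close> guarantees
  that any rank-one member has a nonzero pivot; the vanishing minor through \<open>(l,k)\<close> is then the
  equation \<open>f\<^sub>l\<^sub>,\<^sub>k(i,j;\<lambda>) = 0\<close>, so every rank-one member lies in \<open>\<Lambda>\<close>.\<close>

context vec_space
begin

lemma lin_indpt_pair:
  assumes u: "u \<in> carrier_vec n" and w: "w \<in> carrier_vec n" and p: "p < n" and q: "q < n"
    and minor: "u $ p * w $ q \<noteq> u $ q * w $ p"
  shows "lin_indpt {u, w}" and "u \<noteq> w"
proof -
  show uw: "u \<noteq> w" using minor by auto
  show "lin_indpt {u, w}"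
  proof (rule finite_lin_indpt2)
    show "finite {u, w}" "{u, w} \<subseteq> carrier_vec n" using u w by auto
    fix a assume "lincomb a {u, w} = 0\<^sub>v n"
    then have "lincomb a {u, w} $ p = 0" "lincomb a {u, w} $ q = 0" using p q by auto
    then have ep: "a u * u $ p + a w * w $ p = 0" and eq: "a u * u $ q + a w * w $ q = 0"
      using lincomb_index[OF p, of "{u, w}" a] lincomb_index[OF q, of "{u, w}" a] u w uw by auto
    have "a u * (u $ p * w $ q - u $ q * w $ p)
        = w $ q * (a u * u $ p + a w * w $ p) - w $ p * (a u * u $ q + a w * w $ q)"
      by (simp add: algebra_simps)
    then have "a u = 0" using ep eq minor by simp
    have "a w * (u $ p * w $ q - u $ q * w $ p)
        = u $ p * (a u * u $ q + a w * w $ q) - u $ q * (a u * u $ p + a w * w $ p)"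
      by (simp add: algebra_simps)
    then have "a w = 0" using ep eq minor by simp
    with \<open>a u = 0\<close> show "\<forall>v\<in>{u, w}. a v = 0" by simp
  qed
qed

lemma lin_indpt_singleton:
  assumes u: "u \<in> carrier_vec n" and p: "p < n" and "u $ p \<noteq> 0"
  shows "lin_indpt {u}"
proof (rule finite_lin_indpt2)
  show "finite {u}" "{u} \<subseteq> carrier_vec n" using u by auto
  fix a assume "lincomb a {u} = 0\<^sub>v n"
  then have "a u * u $ p = 0" using lincomb_index[OF p, of "{u}" a] u p by auto
  then show "\<forall>v\<in>{u}. a v = 0" using \<open>u $ p \<noteq> 0\<close> by simp
qed

lemma rank_ge_2_if_minor_nonzero:
  assumes M: "M \<in> carrier_mat n nc" and "s < n" "p < n" "t < nc" "q < nc"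
    and "M $$ (p, q) * M $$ (s, t) \<noteq> M $$ (s, q) * M $$ (p, t)"
  shows "rank M \<ge> 2"
proof -
  have cols: "col M q \<in> carrier_vec n" "col M t \<in> carrier_vec n" using M by auto
  have "col M q $ p * col M t $ s \<noteq> col M q $ s * col M t $ p" using assms by auto
  note indpt = lin_indpt_pair[OF cols \<open>p < n\<close> \<open>s < n\<close> this]
  have "{col M q, col M t} \<subseteq> set (cols M)" using assms by (auto simp: cols_def)
  moreover have "card {col M q, col M t} = 2" using indpt(2) by simp
  ultimately show ?thesis using rank_ge_card_indpt[OF M _ indpt(1)] by simp
qed

lemma rank_pos_if_entry_nonzero:
  assumes M: "M \<in> carrier_mat n nc" and "s < n" "t < nc" and "M $$ (s, t) \<noteq> 0"
  shows "rank M \<ge> 1"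
proof -
  have "lin_indpt {col M t}" using lin_indpt_singleton[of "col M t" s] assms by auto
  moreover have "{col M t} \<subseteq> set (cols M)" using assms by (auto simp: cols_def)
  ultimately show ?thesis using rank_ge_card_indpt[OF M, of "{col M t}"] by simp
qed

lemma rank_eq_1_iff_minors_through_pivot_vanish:
  assumes M: "M \<in> carrier_mat n nc" and i: "i < n" and j: "j < nc" and pivot: "M $$ (i, j) \<noteq> 0"
  shows "rank M = 1 \<longleftrightarrow>
    (\<forall>s<n. \<forall>t<nc. M $$ (s, t) * M $$ (i, j) = M $$ (s, j) * M $$ (i, t))"
proof
  assume "rank M = 1"
  show "\<forall>s<n. \<forall>t<nc. M $$ (s, t) * M $$ (i, j) = M $$ (s, j) * M $$ (i, t)"
  proof (intro allI impI)
    fix s t assume "s < n" "t < nc"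
    show "M $$ (s, t) * M $$ (i, j) = M $$ (s, j) * M $$ (i, t)"
    proof (rule ccontr)
      assume "M $$ (s, t) * M $$ (i, j) \<noteq> M $$ (s, j) * M $$ (i, t)"
      then have "M $$ (i, j) * M $$ (s, t) \<noteq> M $$ (s, j) * M $$ (i, t)" by (simp add: mult.commute)
      from rank_ge_2_if_minor_nonzero[OF M \<open>s < n\<close> i \<open>t < nc\<close> j this] \<open>rank M = 1\<close>
      show False by simp
    qed
  qed
next
  assume minors: "\<forall>s<n. \<forall>t<nc. M $$ (s, t) * M $$ (i, j) = M $$ (s, j) * M $$ (i, t)"
  have "rank M \<le> 1"
  proof (rule rank_le_1_product_entries[OF M])
    fix s t assume "s < dim_row M" "t < dim_col M"
    then have "M $$ (s, t) * M $$ (i, j) = M $$ (s, j) * M $$ (i, t)" using M minors by simp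
    then show "M $$ (s, t) = M $$ (s, j) * (M $$ (i, t) / M $$ (i, j))"
      using pivot by (simp add: eq_divide_eq)
  qed
  with rank_pos_if_entry_nonzero[OF M i j pivot] show "rank M = 1" by simp
qed

end

lemma outer_col_row_iff_minors_through_pivot_vanish:
  fixes M :: "complex mat"
  assumes M: "M \<in> carrier_mat n nc" and "i < n" "j < nc" and pivot: "M $$ (i, j) \<noteq> 0"
  shows "M = outer (col M j) ((1 / M $$ (i, j)) \<cdot>\<^sub>v row M i) \<longleftrightarrow>
    (\<forall>s<n. \<forall>t<nc. M $$ (s, t) * M $$ (i, j) = M $$ (s, j) * M $$ (i, t))"
    (is "M = ?O \<longleftrightarrow> ?minors")
proof -
  have O: "s < n \<Longrightarrow> t < nc \<Longrightarrow> ?O $$ (s, t) = M $$ (s, j) * (M $$ (i, t) / M $$ (i, j))" for s t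
    using assms by (simp add: outer_def)
  have "M = ?O \<longleftrightarrow> (\<forall>s<n. \<forall>t<nc. M $$ (s, t) = ?O $$ (s, t))"
  proof
    show "M = ?O \<Longrightarrow> \<forall>s<n. \<forall>t<nc. M $$ (s, t) = ?O $$ (s, t)" by metis
    show "\<forall>s<n. \<forall>t<nc. M $$ (s, t) = ?O $$ (s, t) \<Longrightarrow> M = ?O"
      using M by (intro eq_matI) (auto simp: outer_def)
  qed
  also have "\<dots> \<longleftrightarrow> ?minors"
    using pivot by (simp add: O eq_divide_eq)
  finally show ?thesis .
qed

lemma pencil_carrier:
  "A \<in> carrier_mat m n \<Longrightarrow> B \<in> carrier_mat m n \<Longrightarrow> pencil A B lam \<in> carrier_mat m n"
  by (simp add: pencil_def cmat_def)

lemma pencil_index: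
  "A \<in> carrier_mat m n \<Longrightarrow> B \<in> carrier_mat m n \<Longrightarrow> s < m \<Longrightarrow> t < n \<Longrightarrow>
   pencil A B lam $$ (s, t) = complex_of_real (A $$ (s, t)) + lam * complex_of_real (B $$ (s, t))"
  by (simp add: pencil_def cmat_def)

lemma crank_pencil_eq_1_iff_outer:
  assumes A: "A \<in> carrier_mat m n" and B: "B \<in> carrier_mat m n" and "i < m" "j < n"
    and "complex_of_real (A $$ (i, j)) + lam * complex_of_real (B $$ (i, j)) \<noteq> 0"
  shows "crank (pencil A B lam) = 1 \<longleftrightarrow> pencil A B lam = outer (rvec A B j lam) (cvec A B i j lam)"
proof -
  let ?P = "pencil A B lam"
  have P: "?P \<in> carrier_mat m n" using pencil_carrier[OF A B] .
  have pivot: "?P $$ (i, j) \<noteq> 0" using assms by (simp add: pencil_index)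
  have "cvec A B i j lam = (1 / ?P $$ (i, j)) \<cdot>\<^sub>v row ?P i"
    using assms by (simp add: cvec_def pencil_index)
  then have "?P = outer (rvec A B j lam) (cvec A B i j lam) \<longleftrightarrow>
      (\<forall>s<m. \<forall>t<n. ?P $$ (s, t) * ?P $$ (i, j) = ?P $$ (s, j) * ?P $$ (i, t))"
    using outer_col_row_iff_minors_through_pivot_vanish[OF P \<open>i < m\<close> \<open>j < n\<close> pivot]
    by (simp add: rvec_def)
  moreover have "crank ?P = vec_space.rank m ?P" using P by (simp add: crank_def)
  ultimately show ?thesis
    using vec_space.rank_eq_1_iff_minors_through_pivot_vanish[OF P \<open>i < m\<close> \<open>j < n\<close> pivot] by simp
qed

lemma pivot_nonzero_if_crank_pencil_eq_1:
  assumes "A $$ (i, j) \<noteq> 0"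
    and "\<not> (B $$ (i, j) \<noteq> 0 \<and> crank (pencil A B (- complex_of_real (A $$ (i, j) / B $$ (i, j)))) = 1)"
    and "crank (pencil A B lam) = 1"
  shows "complex_of_real (A $$ (i, j)) + lam * complex_of_real (B $$ (i, j)) \<noteq> 0"
proof
  assume zero: "complex_of_real (A $$ (i, j)) + lam * complex_of_real (B $$ (i, j)) = 0"
  with assms(1) have "B $$ (i, j) \<noteq> 0" by auto
  moreover from zero this have "lam = - complex_of_real (A $$ (i, j) / B $$ (i, j))"
    by (simp add: field_simps eq_neg_iff_add_eq_0 mult.commute)
  ultimately show False using assms(2,3) by simp
qed

lemma fval_eq_0_if_pencil_outer:
  assumes A: "A \<in> carrier_mat m n" and B: "B \<in> carrier_mat m n"
    and "i < m" "j < n" "l < m" "k < n"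
    and pivot: "complex_of_real (A $$ (i, j)) + lam * complex_of_real (B $$ (i, j)) \<noteq> 0"
    and outer: "pencil A B lam = outer (rvec A B j lam) (cvec A B i j lam)"
  shows "fval A B l k i j lam = 0"
proof -
  let ?P = "pencil A B lam"
  have "?P $$ (l, k) = outer (rvec A B j lam) (cvec A B i j lam) $$ (l, k)"
    using outer by metis
  also have "\<dots> = ?P $$ (l, j) * ?P $$ (i, k) / ?P $$ (i, j)"
    using carrier_matD[OF pencil_carrier[OF A B]] A B \<open>i < m\<close> \<open>j < n\<close> \<open>l < m\<close> \<open>k < n\<close> pivot
    by (simp add: outer_def rvec_def cvec_def pencil_index)
  finally show ?thesis
    unfolding fval_def Let_def
    using pencil_index[OF A B] \<open>i < m\<close> \<open>j < n\<close> \<open>l < m\<close> \<open>k < n\<close> by simp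
qed

theorem mainTheorem7:
  fixes A B :: "real mat" and m n i j l k :: nat
  assumes "A \<in> carrier_mat m n" and "B \<in> carrier_mat m n"
    and "A \<noteq> 0\<^sub>m m n" and "B \<noteq> 0\<^sub>m m n"
    and "crank (pencil A B 1) > 1"
    and "i < m" and "j < n" and "A $$ (i,j) \<noteq> 0"
    and "\<not> (B $$ (i,j) \<noteq> 0 \<and>
              crank (pencil A B (- complex_of_real (A $$ (i,j) / B $$ (i,j)))) = 1)"
    and "l < m" and "k < n" and "fnum A B l k i j \<noteq> 0"
  shows "(\<exists>lam::complex. crank (pencil A B lam) = 1) \<longleftrightarrow>
         (\<exists>lh \<in> {lh::complex. complex_of_real (A $$ (i,j)) + lh * complex_of_real (B $$ (i,j)) \<noteq> 0
                             \<and> fval A B l k i j lh = 0}.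
            pencil A B lh = outer (rvec A B j lh) (cvec A B i j lh))"
proof
  assume "\<exists>lam. crank (pencil A B lam) = 1"
  then obtain lam where rank1: "crank (pencil A B lam) = 1" by blast
  have pivot: "complex_of_real (A $$ (i, j)) + lam * complex_of_real (B $$ (i, j)) \<noteq> 0"
    using pivot_nonzero_if_crank_pencil_eq_1[OF assms(8,9) rank1] .
  have outer: "pencil A B lam = outer (rvec A B j lam) (cvec A B i j lam)"
    using crank_pencil_eq_1_iff_outer[OF assms(1,2,6,7) pivot] rank1 by simp
  have "fval A B l k i j lam = 0"
    using fval_eq_0_if_pencil_outer[OF assms(1,2,6,7,10,11) pivot outer] .
  with pivot outer show "\<exists>lh \<in> {lh. complex_of_real (A $$ (i,j)) + lh * complex_of_real (B $$ (i,j)) \<noteq> 0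
                             \<and> fval A B l k i j lh = 0}.
            pencil A B lh = outer (rvec A B j lh) (cvec A B i j lh)" by blast
next
  assume "\<exists>lh \<in> {lh. complex_of_real (A $$ (i,j)) + lh * complex_of_real (B $$ (i,j)) \<noteq> 0
                             \<and> fval A B l k i j lh = 0}.
            pencil A B lh = outer (rvec A B j lh) (cvec A B i j lh)"
  then obtain lh where "complex_of_real (A $$ (i, j)) + lh * complex_of_real (B $$ (i, j)) \<noteq> 0"
    and "pencil A B lh = outer (rvec A B j lh) (cvec A B i j lh)" by blast
  then show "\<exists>lam. crank (pencil A B lam) = 1"
    using crank_pencil_eq_1_iff_outer[OF assms(1,2,6,7)] by blast
qed

end
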